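(* Let $\Omega\subset\mathbb{R}^N$ be a bounded open set and let $p,q:\Omega\to[1,\infty)$ be measurable with $q(x)\le p(x)\le p_+<\infty$ for all $x\in\Omega$. Let $K\subset\Omega$ be compact and suppose $\varphi(t)=|\{x\in\Omega:d_K(x)<t\}|\le Ct^\sigma$ for all $t>0$, for some $C>0$ and $\sigma\in(0,N]$. Let $\psi:(1,\infty)\to(0,\infty)$ be such that $\psi(t)/\ln t$ is decreasing and $\lim_{t\to\infty}\psi(t)=\infty$, and assume that for a.e. $x\in\Omega$ we have $0<d_K(x)<1$ and $$\frac{1}{p(x)-q(x)}\le\frac{\ln(1/d_K(x))}{\psi(1/d_K(x))}.$$ Then $L^{p(\cdot)}(\Omega)$ is almost-compactly embedded in $L^{q(\cdot)}(\Omega)$.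
   Context: $d_K(x)=\operatorname{dist}(x,K)$; $\frac1{p(x)-q(x)}=+\infty$ where $p(x)=q(x)$. For measurable $e:\Omega\to[1,\infty)$, $\|u\|_{e(\cdot)}=\inf\{\lambda>0:\int_\Omega|u(x)/\lambda|^{e(x)}dx\le1\}$ and $L^{e(\cdot)}(\Omega)$ is the set of measurable $u$ with finite norm. Almost-compact embedding: for Banach function spaces $X,Y$ on $\Omega$, $X$ is almost-compactly embedded in $Y$ if for every sequence $\{E_n\}$ of measurable subsets of $\Omega$ with $\chi_{E_n}\to0$ pointwise a.e. one has $\lim_{n\to\infty}\sup_{\|u\|_X\le1}\|u\chi_{E_n}\|_Y=0$. *)

theory Defs
  imports "HOL-Analysis.Analysis"
begin

text \<open>Luxemburg norm of the variable exponent Lebesgue space on Omega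
  (value in ennreal; Inf of the empty set is infinity).\<close>
definition vnorm :: "('a::euclidean_space \<Rightarrow> real) \<Rightarrow> 'a set \<Rightarrow> ('a \<Rightarrow> real) \<Rightarrow> ennreal" where
  "vnorm e \<Omega> u = (INF l\<in>{l::real. l > 0 \<and>
      (\<integral>\<^sup>+ x. ennreal (\<bar>u x / l\<bar> powr e x) \<partial>lebesgue_on \<Omega>) \<le> 1}. ennreal l)"

definition Lvar :: "('a::euclidean_space \<Rightarrow> real) \<Rightarrow> 'a set \<Rightarrow> ('a \<Rightarrow> real) set" where
  "Lvar e \<Omega> = {u. u \<in> borel_measurable (lebesgue_on \<Omega>) \<and> vnorm e \<Omega> u < \<infinity>}"

definition almost_compact_emb :: "('a::euclidean_space \<Rightarrow> real) \<Rightarrow> ('a \<Rightarrow> real) \<Rightarrow> 'a set \<Rightarrow> bool" where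
  "almost_compact_emb p q \<Omega> \<longleftrightarrow>
    (\<forall>E :: nat \<Rightarrow> 'a set.
       (\<forall>n. E n \<in> sets lebesgue \<and> E n \<subseteq> \<Omega>) \<and>
       (AE x in lebesgue_on \<Omega>. (\<lambda>n. indicator (E n) x :: real) \<longlonglongrightarrow> 0) \<longrightarrow>
       ((\<lambda>n. SUP u\<in>{u\<in>Lvar p \<Omega>. vnorm p \<Omega> u \<le> 1}.
              vnorm q \<Omega> (\<lambda>x. u x * indicator (E n) x)) \<longlonglongrightarrow> 0))"

end

theory Submission
  imports Defs
begin

(* Let w = exp (\<Lambda> / (p - q)). The hypothesis on \<psi> gives w \<le> c + d_K^(-\<sigma>/2) almost
   everywhere, and the decay |{d_K < t}| \<le> C t^\<sigma> makes d_K^(-\<sigma>/2) integrable (sum over the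
   dyadic shells of d_K), so w is integrable for every \<Lambda> > 0.
   Pointwise, with H = exp (ln (1/\<eta>) / (p - q)) and \<Lambda> = P ln (1/\<eta>): for g \<le> H one has
   (\<mu> g)^q \<le> (\<mu> H)^P = \<mu>^P w, and for g > H one has g^(q-p) \<le> H^(q-p) = \<eta>, so
   (\<mu> g)^q \<le> \<mu>^P (w + \<eta> g^p). Applied to g = |u|/2 on E_n, the q-modular of u \<chi>_E_n / \<epsilon>
   is at most \<mu>^P (\<integral>_E_n w + \<eta>) uniformly over the unit ball of L^p(.), and \<integral>_E_n w \<rightarrow> 0
   by dominated convergence. *)

lemma dyadic_term_eq:
  fixes C s \<sigma> :: real and k :: nat
  shows "2 powr ((real k + 1) * s) * (C * (2 * (1/2)^k) powr \<sigma>)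
       = C * 2 powr (s + \<sigma>) * (2 powr (s - \<sigma>))^k"
proof -
  have "(2::real) * (1/2)^k = 2 powr (1 - real k)"
    by (simp add: powr_diff powr_realpow power_one_over field_simps)
  then have "2 powr ((real k + 1) * s) * (C * (2 * (1/2)^k) powr \<sigma>)
      = C * 2 powr ((s + \<sigma>) + real k * (s - \<sigma>))"
    by (simp add: powr_powr powr_add[symmetric] algebra_simps)
  also have "\<dots> = C * 2 powr (s + \<sigma>) * (2 powr (s - \<sigma>))^k"
    by (simp add: powr_add powr_realpow[symmetric] powr_powr mult.commute)
  finally show ?thesis .
qed

lemma powr_neg_le_dyadic_sum:
  fixes d s :: real
  assumes "0 < d" "0 < s"
  shows "ennreal (d powr (-s))
    \<le> 1 + (\<Sum>k. ennreal (2 powr ((real k + 1) * s)) * indicator {y. y < 2 * (1/2)^k} d)"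
    (is "_ \<le> 1 + ?S")
proof (cases "1 \<le> d")
  case True
  then have "d powr (-s) \<le> 1"
    using assms by (simp add: powr_minus inverse_le_1_iff ge_one_powr_ge_zero)
  then show ?thesis
    by (intro order_trans[OF _ add_increasing2[of ?S 1 1]]) (auto simp: ennreal_le_1)
next
  case False
  have "\<exists>n. (1/2::real)^n < d" using real_arch_pow_inv[of d "1/2"] assms by auto
  then obtain n where n: "(1/2::real)^n < d" and least: "\<And>m. m < n \<Longrightarrow> \<not> (1/2::real)^m < d"
    using exists_least_iff[of "\<lambda>n. (1/2::real)^n < d"] by blast
  with False obtain m where m: "n = Suc m" by (cases n) auto
  have "d < 2 * (1/2)^m"
    using least[of m] m zero_less_power[of "1/2::real" m] by linarith
  then have ind: "indicator {y::real. y < 2 * (1/2)^m} d = (1::ennreal)" by simp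
  have term_le_suminf: "f m \<le> suminf f" for f :: "nat \<Rightarrow> ennreal"
    using sum_le_suminf[of f "{m}"] by (simp add: summableI)
  have "d powr (-s) \<le> ((1/2)^(Suc m)) powr (-s)"
    using n m assms by (intro powr_mono2') auto
  also have "\<dots> = 2 powr ((real m + 1) * s)"
  proof -
    have "2 powr real (Suc m) = (2::real)^(Suc m)" by (rule powr_realpow) simp
    then have "(1/2::real)^(Suc m) = 2 powr (- (real m + 1))"
      unfolding powr_minus by (simp add: power_one_over inverse_eq_divide add.commute)
    then show ?thesis by (simp only: powr_powr) (simp add: algebra_simps)
  qed
  finally have "ennreal (d powr (-s)) \<le> ennreal (2 powr ((real m + 1) * s)) * indicator {y. y < 2 * (1/2)^m} d"
    unfolding ind by (simp add: ennreal_leI)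
  also have "\<dots> \<le> ?S" by (rule term_le_suminf)
  also have "?S \<le> 1 + ?S" by (rule add_increasing) auto
  finally show ?thesis .
qed

lemma nn_integral_powr_neg_finite:
  fixes f :: "'b \<Rightarrow> real"
  assumes [measurable]: "f \<in> borel_measurable M"
    and nonneg: "\<And>x. x \<in> space M \<Longrightarrow> 0 \<le> f x"
    and finite: "emeasure M (space M) < \<infinity>"
    and sublevel: "\<And>t. 0 < t \<Longrightarrow> emeasure M {x\<in>space M. f x < t} \<le> ennreal (C * t powr \<sigma>)"
    and s: "0 < s" "s < \<sigma>" and "0 < C"
  shows "(\<integral>\<^sup>+ x. ennreal (f x powr (-s)) \<partial>M) < \<infinity>"
proof -
  define A where "A k = {x\<in>space M. f x < 2 * (1/2::real)^k}" for k :: nat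
  define w where "w k = ennreal (2 powr ((real k + 1) * s))" for k :: nat
  define r where "r = 2 powr (s - \<sigma>)"
  have [measurable]: "A k \<in> sets M" for k
    unfolding A_def by measurable
  have r: "0 < r" "r < 1"
    using s powr_less_mono[of "s - \<sigma>" 0 2] by (auto simp: r_def)
  have "(\<integral>\<^sup>+ x. ennreal (f x powr (-s)) \<partial>M) \<le> (\<integral>\<^sup>+ x. 1 + (\<Sum>k. w k * indicator (A k) x) \<partial>M)"
  proof (rule nn_integral_mono)
    fix x assume x: "x \<in> space M"
    show "ennreal (f x powr (-s)) \<le> 1 + (\<Sum>k. w k * indicator (A k) x)"
    proof (cases "f x = 0")
      case False
      with nonneg[OF x] have "0 < f x" by simp
      from powr_neg_le_dyadic_sum[OF this s(1)] show ?thesis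
        using x by (simp add: w_def A_def indicator_def)
    qed simp
  qed
  also have "\<dots> = emeasure M (space M) + (\<Sum>k. w k * emeasure M (A k))"
    by (simp add: nn_integral_add nn_integral_suminf nn_integral_cmult_indicator)
  also have "(\<Sum>k. w k * emeasure M (A k)) \<le> (\<Sum>k. ennreal (C * 2 powr (s + \<sigma>) * r^k))"
  proof (intro suminf_le allI)
    fix k
    have "w k * emeasure M (A k) \<le> w k * ennreal (C * (2 * (1/2::real)^k) powr \<sigma>)"
      unfolding A_def by (intro mult_left_mono sublevel) auto
    also have "\<dots> = ennreal (C * 2 powr (s + \<sigma>) * r^k)"
      using \<open>0 < C\<close> by (simp add: w_def r_def ennreal_mult'[symmetric] dyadic_term_eq)
    finally show "w k * emeasure M (A k) \<le> ennreal (C * 2 powr (s + \<sigma>) * r^k)" .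
  qed auto
  also have "\<dots> = ennreal (\<Sum>k. C * 2 powr (s + \<sigma>) * r^k)"
    using r \<open>0 < C\<close> by (intro suminf_ennreal2 summable_mult summable_geometric) auto
  finally show ?thesis
    using finite by (auto simp: ennreal_add_less_top elim: order.strict_trans1)
qed

lemma powr_le_exp_gap_plus:
  fixes p q P \<mu> \<eta> g :: real
  assumes q: "1 \<le> q" "q < p" "p \<le> P" and \<mu>: "1 \<le> \<mu>"
    and \<eta>: "0 < \<eta>" "\<eta> < 1" and g: "0 \<le> g"
  shows "(\<mu> * g) powr q \<le> \<mu> powr P * exp (P * ln (1/\<eta>) / (p - q)) + \<mu> powr P * \<eta> * g powr p"
proof -
  define H where "H = exp (ln (1/\<eta>) / (p - q))"
  have H1: "1 \<le> H"
    unfolding H_def using \<eta> q by (simp add: zero_le_divide_iff)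
  have HP: "H powr P = exp (P * ln (1/\<eta>) / (p - q))"
    unfolding H_def powr_def by simp
  have "(\<mu> * g) powr q \<le> \<mu> powr P * H powr P + \<mu> powr P * \<eta> * g powr p"
  proof (cases "g \<le> H")
    case True
    have "1 \<le> \<mu> * H" using \<mu> H1 by (metis mult_mono order.trans mult_1 zero_le_one)
    then have "(\<mu> * g) powr q \<le> (\<mu> * H) powr P"
      using True \<mu> g q by (intro order.trans[OF powr_mono2 powr_mono]) auto
    also have "\<dots> = \<mu> powr P * H powr P"
      using \<mu> H1 by (simp add: powr_mult)
    finally show ?thesis using \<eta> by (simp add: add_increasing2)
  next
    case False
    then have g_pos: "0 < g" using H1 by linarith
    have "(q - p) * (ln (1/\<eta>) / (p - q)) = ln \<eta>"
      using q \<eta> by (simp add: ln_div field_simps)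
    then have "H powr (q - p) = \<eta>"
      unfolding H_def powr_def using \<eta> by simp
    moreover have "g powr (q - p) \<le> H powr (q - p)"
      using False H1 q by (intro powr_mono2') auto
    ultimately have "g powr (q - p) \<le> \<eta>" by simp
    then have "g powr q \<le> \<eta> * g powr p"
      using g_pos mult_right_mono[of "g powr (q - p)" \<eta> "g powr p"]
      by (simp add: powr_add[symmetric])
    then have "(\<mu> * g) powr q \<le> \<mu> powr P * (\<eta> * g powr p)"
      using \<mu> g_pos q powr_mono[of q P \<mu>]
      by (simp add: powr_mult mult_mono)
    then show ?thesis by (simp add: mult.assoc add_increasing)
  qed
  then show ?thesis unfolding HP .
qed

lemma exp_div_le_exp_plus_powr:
  fixes d \<delta> \<Lambda> s T :: real and \<psi> :: "real \<Rightarrow> real"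
  assumes d: "0 < d" "d < 1" and \<delta>: "0 < \<delta>"
    and gap: "1 / \<delta> \<le> ln (1 / d) / \<psi> (1 / d)"
    and \<Lambda>: "0 < \<Lambda>" and s: "0 < s" and T: "1 < T"
    and large: "\<And>t. T \<le> t \<Longrightarrow> \<Lambda> / s \<le> \<psi> t"
    and pos: "\<And>t. 1 < t \<Longrightarrow> 0 < \<psi> t"
    and decreasing: "\<And>t t'. 1 < t \<Longrightarrow> t \<le> t' \<Longrightarrow> \<psi> t' / ln t' \<le> \<psi> t / ln t"
  shows "exp (\<Lambda> / \<delta>) \<le> exp (\<Lambda> * ln T / \<psi> T) + d powr (-s)"
proof -
  define t where "t = 1 / d"
  have t: "1 < t" "0 < ln t" "0 < \<psi> t"
    using d pos by (auto simp: t_def)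
  have "\<Lambda> / \<delta> \<le> \<Lambda> * ln t / \<psi> t"
    using mult_left_mono[OF gap, of \<Lambda>] \<Lambda> by (simp add: t_def)
  moreover have "\<Lambda> * ln t / \<psi> t \<le> s * ln t \<or> \<Lambda> * ln t / \<psi> t \<le> \<Lambda> * ln T / \<psi> T"
  proof (cases "T \<le> t")
    case True
    then have "\<Lambda> \<le> s * \<psi> t" using large[of t] s by (simp add: field_simps)
    then show ?thesis using t by (simp add: field_simps)
  next
    case False
    then have "\<psi> T / ln T \<le> \<psi> t / ln t" using decreasing t by simp
    moreover have "0 < \<psi> T / ln T" using pos T by simp
    ultimately have "\<Lambda> / (\<psi> t / ln t) \<le> \<Lambda> / (\<psi> T / ln T)"
      using \<Lambda> by (intro divide_left_mono mult_pos_pos) auto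
    then show ?thesis by simp
  qed
  moreover have "exp (s * ln t) = d powr (-s)"
    using d by (simp add: t_def powr_def ln_div)
  ultimately show ?thesis
    by (smt (verit) exp_gt_zero exp_le_cancel_iff powr_ge_zero)
qed

lemma vnorm_le_one_imp_modular_half:
  assumes "vnorm p \<Omega> u \<le> 1" and p: "\<And>x. x \<in> \<Omega> \<Longrightarrow> 0 \<le> p x"
  shows "(\<integral>\<^sup>+ x. ennreal (\<bar>u x / 2\<bar> powr p x) \<partial>lebesgue_on \<Omega>) \<le> 1"
proof -
  have "vnorm p \<Omega> u < 2" using assms(1) by (rule le_less_trans) simp
  then obtain l where l: "0 < l" "l < 2" and modular: "(\<integral>\<^sup>+ x. ennreal (\<bar>u x / l\<bar> powr p x) \<partial>lebesgue_on \<Omega>) \<le> 1"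
    unfolding vnorm_def by (auto simp: INF_less_iff ennreal_less_iff)
  have "(\<integral>\<^sup>+ x. ennreal (\<bar>u x / 2\<bar> powr p x) \<partial>lebesgue_on \<Omega>) \<le> (\<integral>\<^sup>+ x. ennreal (\<bar>u x / l\<bar> powr p x) \<partial>lebesgue_on \<Omega>)"
  proof (rule nn_integral_mono)
    fix x assume "x \<in> space (lebesgue_on \<Omega>)"
    moreover have "\<bar>u x / 2\<bar> \<le> \<bar>u x / l\<bar>"
      using l divide_left_mono[of l 2 "\<bar>u x\<bar>"] by (simp add: abs_divide)
    ultimately show "ennreal (\<bar>u x / 2\<bar> powr p x) \<le> ennreal (\<bar>u x / l\<bar> powr p x)"
      using p by (intro ennreal_leI powr_mono2) auto
  qed
  with modular show ?thesis by simp
qed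

lemma vnorm_le_if_modular_le_one:
  assumes "0 < l" and "(\<integral>\<^sup>+ x. ennreal (\<bar>u x / l\<bar> powr e x) \<partial>lebesgue_on \<Omega>) \<le> 1"
  shows "vnorm e \<Omega> u \<le> ennreal l"
  unfolding vnorm_def using assms by (intro INF_lower) auto

lemma nn_integral_powr_indicator_le:
  fixes p q g :: "'b \<Rightarrow> real"
  assumes exponents: "AE x in M. 1 \<le> q x \<and> q x < p x \<and> p x \<le> P"
    and \<mu>: "1 \<le> \<mu>" and \<eta>: "0 < \<eta>" "\<eta> < 1"
    and [measurable]: "p \<in> borel_measurable M" "q \<in> borel_measurable M"
      "g \<in> borel_measurable M" "E \<in> sets M"
    and weight: "(\<integral>\<^sup>+ x. ennreal (exp (P * ln (1/\<eta>) / (p x - q x))) * indicator E x \<partial>M) \<le> \<eta>"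
    and modular: "(\<integral>\<^sup>+ x. ennreal (\<bar>g x\<bar> powr p x) \<partial>M) \<le> 1"
  shows "(\<integral>\<^sup>+ x. ennreal (\<bar>\<mu> * g x * indicator E x\<bar> powr q x) \<partial>M) \<le> ennreal (2 * \<mu> powr P * \<eta>)"
proof -
  define w where "w x = exp (P * ln (1/\<eta>) / (p x - q x))" for x
  define a where "a = \<mu> powr P"
  have a: "0 \<le> a" "0 \<le> a * \<eta>" using \<eta> by (auto simp: a_def)
  have "(\<integral>\<^sup>+ x. ennreal (\<bar>\<mu> * g x * indicator E x\<bar> powr q x) \<partial>M)
      \<le> (\<integral>\<^sup>+ x. ennreal a * (ennreal (w x) * indicator E x) + ennreal (a * \<eta>) * ennreal (\<bar>g x\<bar> powr p x) \<partial>M)"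
  proof (rule nn_integral_mono_AE)
    show "AE x in M. ennreal (\<bar>\<mu> * g x * indicator E x\<bar> powr q x)
        \<le> ennreal a * (ennreal (w x) * indicator E x) + ennreal (a * \<eta>) * ennreal (\<bar>g x\<bar> powr p x)"
      using exponents
    proof eventually_elim
      case (elim x)
      show ?case
      proof (cases "x \<in> E")
        case True
        have "(\<mu> * \<bar>g x\<bar>) powr q x \<le> a * w x + a * \<eta> * \<bar>g x\<bar> powr p x"
          unfolding w_def a_def using elim \<mu> \<eta> by (intro powr_le_exp_gap_plus) auto
        then have "ennreal ((\<mu> * \<bar>g x\<bar>) powr q x) \<le> ennreal (a * w x + a * \<eta> * \<bar>g x\<bar> powr p x)"
          by (rule ennreal_leI)
        also have "\<dots> = ennreal a * ennreal (w x) + ennreal (a * \<eta>) * ennreal (\<bar>g x\<bar> powr p x)"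
          using a by (simp add: ennreal_mult w_def)
        finally show ?thesis
          using True \<mu> by (simp add: abs_mult)
      qed simp
    qed
  qed
  also have "\<dots> = ennreal a * (\<integral>\<^sup>+ x. ennreal (w x) * indicator E x \<partial>M)
      + ennreal (a * \<eta>) * (\<integral>\<^sup>+ x. ennreal (\<bar>g x\<bar> powr p x) \<partial>M)"
    by (simp add: w_def nn_integral_add nn_integral_cmult)
  also have "\<dots> \<le> ennreal a * ennreal \<eta> + ennreal (a * \<eta>) * 1"
    using weight modular by (intro add_mono mult_left_mono) (auto simp: w_def)
  also have "\<dots> = ennreal (a * \<eta> + a * \<eta>)"
    using a \<eta> by (simp add: ennreal_mult mult_2 mult.commute)
  also have "\<dots> = ennreal (2 * \<mu> powr P * \<eta>)"
    by (rule arg_cong[where f = ennreal]) (simp add: a_def)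
  finally show ?thesis .
qed

lemma nn_integral_indicator_tendsto_zero:
  fixes w :: "'b \<Rightarrow> ennreal"
  assumes [measurable]: "w \<in> borel_measurable M" "\<And>n. E n \<in> sets M"
    and finite: "(\<integral>\<^sup>+ x. w x \<partial>M) < \<infinity>"
    and shrinking: "AE x in M. (\<lambda>n. indicator (E n) x :: real) \<longlonglongrightarrow> 0"
  shows "(\<lambda>n. \<integral>\<^sup>+ x. w x * indicator (E n) x \<partial>M) \<longlonglongrightarrow> 0"
proof -
  have "AE x in M. (\<lambda>n. w x * indicator (E n) x) \<longlonglongrightarrow> 0"
    using shrinking
  proof eventually_elim
    case (elim x)
    \<comment> \<open>a \<open>{0, 1}\<close>-valued sequence tending to \<open>0\<close> is eventually \<open>0\<close>\<close>
    have "eventually (\<lambda>n. indicator (E n) x < (1/2 :: real)) sequentially"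
      using elim by (rule order_tendstoD) simp
    then have "eventually (\<lambda>n. w x * indicator (E n) x = 0) sequentially"
      by (rule eventually_mono) (auto simp: indicator_def split: if_splits)
    then show ?case by (rule tendsto_eventually)
  qed
  then have "(\<lambda>n. \<integral>\<^sup>+ x. w x * indicator (E n) x \<partial>M) \<longlonglongrightarrow> (\<integral>\<^sup>+ x. 0 \<partial>M)"
    using finite by (intro nn_integral_dominated_convergence[where w = w]) (auto simp: indicator_def)
  then show ?thesis by simp
qed

lemma vnorm_indicator_le:
  fixes \<Omega> :: "'a::euclidean_space set"
  assumes exponents: "\<forall>x\<in>\<Omega>. 1 \<le> q x \<and> q x \<le> p x \<and> p x \<le> P"
    and gap: "AE x in lebesgue_on \<Omega>. q x < p x"
    and [measurable]: "p \<in> borel_measurable (lebesgue_on \<Omega>)" "q \<in> borel_measurable (lebesgue_on \<Omega>)"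
      "E \<in> sets (lebesgue_on \<Omega>)"
    and \<epsilon>: "0 < \<epsilon>" "\<epsilon> \<le> 1" and P: "1 \<le> P"
    and \<eta>_def: "\<eta> = 1 / (2 * (2/\<epsilon>) powr P)"
    and weight: "(\<integral>\<^sup>+ x. ennreal (exp (P * ln (1/\<eta>) / (p x - q x))) * indicator E x \<partial>lebesgue_on \<Omega>) \<le> \<eta>"
    and u: "u \<in> Lvar p \<Omega>" "vnorm p \<Omega> u \<le> 1"
  shows "vnorm q \<Omega> (\<lambda>x. u x * indicator E x) \<le> ennreal \<epsilon>"
proof -
  define \<mu> where "\<mu> = 2 / \<epsilon>"
  have \<mu>: "1 \<le> \<mu>" "1 \<le> \<mu> powr P"
    using \<epsilon> P by (auto simp: \<mu>_def ge_one_powr_ge_zero)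
  then have \<eta>: "0 < \<eta>" "\<eta> < 1" "2 * \<mu> powr P * \<eta> = 1"
    by (auto simp: \<eta>_def \<mu>_def divide_less_eq)
  have [measurable]: "u \<in> borel_measurable (lebesgue_on \<Omega>)"
    using u by (simp add: Lvar_def)
  have "AE x in lebesgue_on \<Omega>. x \<in> \<Omega>" by (rule AE_I2) simp
  with gap have exps: "AE x in lebesgue_on \<Omega>. 1 \<le> q x \<and> q x < p x \<and> p x \<le> P"
    by eventually_elim (use exponents in auto)
  have "(\<integral>\<^sup>+ x. ennreal (\<bar>u x / 2\<bar> powr p x) \<partial>lebesgue_on \<Omega>) \<le> 1"
    using exponents u by (intro vnorm_le_one_imp_modular_half) force+
  with weight have "(\<integral>\<^sup>+ x. ennreal (\<bar>\<mu> * (u x / 2) * indicator E x\<bar> powr q x) \<partial>lebesgue_on \<Omega>)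
      \<le> ennreal (2 * \<mu> powr P * \<eta>)"
    by (intro nn_integral_powr_indicator_le[OF exps \<mu>(1) \<eta>(1,2)]) auto
  then have "(\<integral>\<^sup>+ x. ennreal (\<bar>\<mu> * (u x / 2) * indicator E x\<bar> powr q x) \<partial>lebesgue_on \<Omega>) \<le> 1"
    using \<eta>(3) by simp
  moreover have "\<mu> * (u x / 2) * indicator E x = u x * indicator E x / \<epsilon>" for x
    by (simp add: \<mu>_def)
  ultimately have "(\<integral>\<^sup>+ x. ennreal (\<bar>u x * indicator E x / \<epsilon>\<bar> powr q x) \<partial>lebesgue_on \<Omega>) \<le> 1"
    by (simp only:)
  with \<epsilon> show ?thesis by (intro vnorm_le_if_modular_le_one)
qed

lemma almost_compact_emb_if_exp_gap_integrable:
  fixes \<Omega> :: "'a::euclidean_space set"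
  assumes exponents: "\<forall>x\<in>\<Omega>. 1 \<le> q x \<and> q x \<le> p x \<and> p x \<le> P" and P: "1 \<le> P"
    and gap: "AE x in lebesgue_on \<Omega>. q x < p x"
    and [measurable]: "\<Omega> \<in> sets lebesgue"
      "p \<in> borel_measurable (lebesgue_on \<Omega>)" "q \<in> borel_measurable (lebesgue_on \<Omega>)"
    and integrable: "\<And>\<Lambda>. 0 < \<Lambda> \<Longrightarrow> (\<integral>\<^sup>+ x. ennreal (exp (\<Lambda> / (p x - q x))) \<partial>lebesgue_on \<Omega>) < \<infinity>"
  shows "almost_compact_emb p q \<Omega>"
  unfolding almost_compact_emb_def
proof (intro allI impI)
  fix E :: "nat \<Rightarrow> 'a set"
  assume E: "(\<forall>n. E n \<in> sets lebesgue \<and> E n \<subseteq> \<Omega>) \<and>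
    (AE x in lebesgue_on \<Omega>. (\<lambda>n. indicator (E n) x :: real) \<longlonglongrightarrow> 0)"
  have [measurable]: "E n \<in> sets (lebesgue_on \<Omega>)" for n
    using E by (auto simp: sets_restrict_space_iff)
  show "(\<lambda>n. SUP u\<in>{u\<in>Lvar p \<Omega>. vnorm p \<Omega> u \<le> 1}. vnorm q \<Omega> (\<lambda>x. u x * indicator (E n) x))
      \<longlonglongrightarrow> 0"
  proof (rule tendsto_zero_ennreal)
    fix r :: real assume "0 < r"
    define \<epsilon> where "\<epsilon> = min (r/2) 1"
    define \<eta> where "\<eta> = 1 / (2 * (2/\<epsilon>) powr P)"
    have \<epsilon>: "0 < \<epsilon>" "\<epsilon> \<le> 1" "\<epsilon> < r"
      using \<open>0 < r\<close> by (auto simp: \<epsilon>_def)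
    then have "1 \<le> (2/\<epsilon>) powr P"
      using P by (intro ge_one_powr_ge_zero) auto
    then have \<eta>: "0 < \<eta>" "\<eta> < 1"
      by (auto simp: \<eta>_def divide_less_eq)
    have "(\<lambda>n. \<integral>\<^sup>+ x. ennreal (exp (P * ln (1/\<eta>) / (p x - q x))) * indicator (E n) x \<partial>lebesgue_on \<Omega>)
        \<longlonglongrightarrow> 0"
      using E \<eta> P by (intro nn_integral_indicator_tendsto_zero integrable) auto
    then have "eventually (\<lambda>n. (\<integral>\<^sup>+ x. ennreal (exp (P * ln (1/\<eta>) / (p x - q x))) * indicator (E n) x
        \<partial>lebesgue_on \<Omega>) < \<eta>) sequentially"
      using \<eta> by (intro order_tendstoD(2)) auto
    then show "eventually (\<lambda>n. (SUP u\<in>{u\<in>Lvar p \<Omega>. vnorm p \<Omega> u \<le> 1}.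
        vnorm q \<Omega> (\<lambda>x. u x * indicator (E n) x)) < ennreal r) sequentially"
    proof eventually_elim
      case (elim n)
      have "(SUP u\<in>{u\<in>Lvar p \<Omega>. vnorm p \<Omega> u \<le> 1}. vnorm q \<Omega> (\<lambda>x. u x * indicator (E n) x))
          \<le> ennreal \<epsilon>"
        using exponents gap \<epsilon> P \<eta>_def less_imp_le[OF elim] by (intro SUP_least vnorm_indicator_le) auto
      also have "\<dots> < ennreal r" using \<epsilon> by (simp add: ennreal_lessI)
      finally show ?case .
    qed
  qed
qed

lemma nn_integral_exp_gap_finite:
  fixes \<Omega> K :: "'a::euclidean_space set" and p q :: "'a \<Rightarrow> real" and \<psi> :: "real \<Rightarrow> real"
  assumes \<Omega>: "\<Omega> \<in> sets lebesgue" "emeasure lebesgue \<Omega> < \<infinity>"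
    and sublevel: "\<forall>t>0. emeasure lebesgue {x\<in>\<Omega>. infdist x K < t} \<le> ennreal (C * t powr \<sigma>)"
    and "0 < C" "0 < \<sigma>"
    and pos: "\<forall>t>1. \<psi> t > 0"
    and decreasing: "\<forall>s t. 1 < s \<and> s \<le> t \<longrightarrow> \<psi> t / ln t \<le> \<psi> s / ln s"
    and "filterlim \<psi> at_top at_top"
    and gap: "AE x in lebesgue_on \<Omega>. 0 < infdist x K \<and> infdist x K < 1 \<and> q x < p x \<and>
      1 / (p x - q x) \<le> ln (1 / infdist x K) / \<psi> (1 / infdist x K)"
    and "0 < \<Lambda>"
  shows "(\<integral>\<^sup>+ x. ennreal (exp (\<Lambda> / (p x - q x))) \<partial>lebesgue_on \<Omega>) < \<infinity>"
proof -
  define s where "s = \<sigma> / 2"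
  have s: "0 < s" "s < \<sigma>" using \<open>0 < \<sigma>\<close> by (auto simp: s_def)
  have "eventually (\<lambda>t. \<Lambda> / s \<le> \<psi> t) at_top"
    using \<open>filterlim \<psi> at_top at_top\<close> by (simp add: filterlim_at_top)
  then obtain T0 where T0: "\<And>t. T0 \<le> t \<Longrightarrow> \<Lambda> / s \<le> \<psi> t"
    by (auto simp: eventually_at_top_linorder)
  define T where "T = max T0 2"
  define c where "c = exp (\<Lambda> * ln T / \<psi> T)"
  have [measurable]: "(\<lambda>x. infdist x K) \<in> borel_measurable (lebesgue_on \<Omega>)"
    by (intro continuous_imp_measurable_on_sets_lebesgue \<Omega>(1) continuous_intros)
  have "AE x in lebesgue_on \<Omega>. ennreal (exp (\<Lambda> / (p x - q x))) \<le> ennreal c + ennreal (infdist x K powr (-s))"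
    using gap
  proof eventually_elim
    case (elim x)
    have "exp (\<Lambda> / (p x - q x)) \<le> c + infdist x K powr (-s)"
      unfolding c_def using elim \<open>0 < \<Lambda>\<close> s pos decreasing T0
      by (intro exp_div_le_exp_plus_powr) (auto simp: T_def)
    then have "ennreal (exp (\<Lambda> / (p x - q x))) \<le> ennreal (c + infdist x K powr (-s))"
      by (rule ennreal_leI)
    then show ?case by (simp add: c_def)
  qed
  then have "(\<integral>\<^sup>+ x. ennreal (exp (\<Lambda> / (p x - q x))) \<partial>lebesgue_on \<Omega>)
      \<le> (\<integral>\<^sup>+ x. ennreal c + ennreal (infdist x K powr (-s)) \<partial>lebesgue_on \<Omega>)"
    by (rule nn_integral_mono_AE)
  also have "\<dots> = ennreal c * emeasure lebesgue \<Omega> + (\<integral>\<^sup>+ x. ennreal (infdist x K powr (-s)) \<partial>lebesgue_on \<Omega>)"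
    using \<Omega> by (simp add: nn_integral_add emeasure_restrict_space)
  also have "\<dots> < \<infinity>"
  proof -
    have "(\<integral>\<^sup>+ x. ennreal (infdist x K powr (-s)) \<partial>lebesgue_on \<Omega>) < \<infinity>"
      using \<Omega> sublevel s \<open>0 < C\<close>
      by (intro nn_integral_powr_neg_finite[where C = C and \<sigma> = \<sigma>]) (auto simp: emeasure_restrict_space infdist_nonneg)
    then show ?thesis using \<Omega> by (simp add: ennreal_mult_less_top)
  qed
  finally show ?thesis .
qed

theorem mainTheorem11:
  fixes \<Omega> K :: "'a::euclidean_space set"
    and p q :: "'a \<Rightarrow> real" and p_plus C \<sigma> :: real
    and \<psi> :: "real \<Rightarrow> real"
  assumes "bounded \<Omega>" "open \<Omega>"
    and "p \<in> borel_measurable (lebesgue_on \<Omega>)" "q \<in> borel_measurable (lebesgue_on \<Omega>)"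
    and "\<forall>x\<in>\<Omega>. 1 \<le> q x \<and> q x \<le> p x \<and> p x \<le> p_plus"
    and "compact K" "K \<subseteq> \<Omega>"
    and "C > 0" "\<sigma> > 0" "\<sigma> \<le> real DIM('a)"
    and "\<forall>t>0. emeasure lebesgue {x\<in>\<Omega>. infdist x K < t} \<le> ennreal (C * t powr \<sigma>)"
    and "\<forall>t>1. \<psi> t > 0"
    and "\<forall>s t. 1 < s \<and> s \<le> t \<longrightarrow> \<psi> t / ln t \<le> \<psi> s / ln s"
    and "filterlim \<psi> at_top at_top"
    and "AE x in lebesgue_on \<Omega>. 0 < infdist x K \<and> infdist x K < 1 \<and> p x \<noteq> q x \<and>
           1 / (p x - q x) \<le> ln (1 / infdist x K) / \<psi> (1 / infdist x K)"
  shows "almost_compact_emb p q \<Omega>"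
proof -
  have \<Omega>: "\<Omega> \<in> sets lebesgue" "emeasure lebesgue \<Omega> < \<infinity>"
    using lmeasurable_open[OF assms(1,2)] by (auto simp: fmeasurable_def)
  have "AE x in lebesgue_on \<Omega>. x \<in> \<Omega>" by (rule AE_I2) simp
  with assms(15) have gap: "AE x in lebesgue_on \<Omega>. 0 < infdist x K \<and> infdist x K < 1 \<and> q x < p x \<and>
      1 / (p x - q x) \<le> ln (1 / infdist x K) / \<psi> (1 / infdist x K)"
    by eventually_elim (use assms(5) in force)
  have "(\<integral>\<^sup>+ x. ennreal (exp (\<Lambda> / (p x - q x))) \<partial>lebesgue_on \<Omega>) < \<infinity>" if "0 < \<Lambda>" for \<Lambda>
    by (rule nn_integral_exp_gap_finite[OF \<Omega> assms(11,8,9,12-14) gap that])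
  moreover have "\<forall>x\<in>\<Omega>. 1 \<le> q x \<and> q x \<le> p x \<and> p x \<le> max p_plus 1"
    using assms(5) by force
  ultimately show ?thesis
    using gap \<Omega>(1) assms(3,4)
    by (intro almost_compact_emb_if_exp_gap_integrable[where P = "max p_plus 1"]) (auto elim: AE_mp)
qed

end
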